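(* Let $T>0$, $\chi\in\mathbb{R}$, $\zeta\in\mathcal{C}^{\alpha_0}(\mathbb{T})$, $Z\in C_T\mathcal{C}^\alpha_0$, and let $w\in C_{\eta;T}\mathcal{C}^\alpha$ be a mild solution of the remainder equation on $[0,T]$. Then $\bar w_t=\bar\zeta$ for all $t\in(0,T]$.
   Context: $\mathbb{T}=\mathbb{R}/\mathbb{Z}$; $\bar f=\langle f,1\rangle$ is the spatial mean; $\mathcal{C}^\beta=\mathcal{B}^\beta_{\infty,\infty}(\mathbb{T})$ (Hölder–Besov space), subscript $0$ for mean zero; $C_TE=C([0,T];E)$; $C_{\eta;T}E$ is the space of continuous $f:(0,T]\to E$ with $\sup_t(t^\eta\wedge1)\|f_t\|_E<\infty$. Fixed parameters $\alpha_0\in(-\tfrac12,0)$, $\alpha\in(0,\alpha_0+\tfrac12)$, $\frac{\alpha-\alpha_0}2<\eta<\frac14$. $\rho_f$ is the mean-zero solution of $-\partial_{xx}\rho_f=f-\bar f$. A mild solution of the remainder equation on $[0,T]$ is $w\in C_{\eta;T}\mathcal{C}^\alpha$ with $w_t=e^{t\Delta}\zeta+\int_0^te^{(t-s)\Delta}\chi\partial_x((w_s+Z_s)^2\partial_x\rho_{w_s+Z_s})ds$ for all $t\in(0,T]$. *)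

theory Defs
  imports "HOL-Analysis.Analysis"
begin

(* Functions on the torus T = R/Z are modelled as 1-periodic functions real => real.
   Periodic distributions on T are modelled by their Fourier coefficients
   c :: int => complex, with c k = <f, e_{-k}>, e_k(x) = exp(2 pi i k x). *)

definition periodic1 :: "(real \<Rightarrow> real) \<Rightarrow> bool" where
  "periodic1 f \<longleftrightarrow> (\<forall>x. f (x + 1) = f x)"

definition tmean :: "(real \<Rightarrow> real) \<Rightarrow> real" where
  "tmean f = integral {0..1} f"

definition fcoeff :: "(real \<Rightarrow> real) \<Rightarrow> int \<Rightarrow> complex" where
  "fcoeff f k = integral {0..1} (\<lambda>x. complex_of_real (f x) * exp (- 2 * pi * \<i> * of_int k * of_real x))"

definition smooth_fun :: "(real \<Rightarrow> real) \<Rightarrow> bool" where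
  "smooth_fun f \<longleftrightarrow> (\<forall>n x. ((deriv ^^ n) f) differentiable (at x))"

(* dyadic partition of unity (chi, phi) in the sense of Bahouri--Chemin--Danchin *)
definition dyadic_partition :: "(real \<Rightarrow> real) \<Rightarrow> (real \<Rightarrow> real) \<Rightarrow> bool" where
  "dyadic_partition \<chi>0 \<phi> \<longleftrightarrow>
     smooth_fun \<chi>0 \<and> smooth_fun \<phi> \<and>
     (\<forall>x. \<chi>0 (-x) = \<chi>0 x \<and> \<phi> (-x) = \<phi> x \<and> 0 \<le> \<chi>0 x \<and> 0 \<le> \<phi> x) \<and>
     (\<forall>x. \<bar>x\<bar> \<ge> 4/3 \<longrightarrow> \<chi>0 x = 0) \<and>
     (\<forall>x. (\<bar>x\<bar> \<le> 3/4 \<or> \<bar>x\<bar> \<ge> 8/3) \<longrightarrow> \<phi> x = 0) \<and>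
     (\<forall>x. \<chi>0 x + (\<Sum>j. \<phi> (x / 2 ^ j)) = 1)"

definition dp_chi :: "real \<Rightarrow> real" where
  "dp_chi = fst (SOME p. dyadic_partition (fst p) (snd p))"

definition dp_phi :: "real \<Rightarrow> real" where
  "dp_phi = snd (SOME p. dyadic_partition (fst p) (snd p))"

(* Fourier multiplier of the Littlewood--Paley block Delta_{n-1}, n :: nat
   (n = 0 is the block Delta_{-1}) *)
definition lp_mult :: "nat \<Rightarrow> int \<Rightarrow> real" where
  "lp_mult n k = (if n = 0 then dp_chi (real_of_int k)
                  else dp_phi (real_of_int k / 2 ^ (n - 1)))"

definition lp_block :: "(int \<Rightarrow> complex) \<Rightarrow> nat \<Rightarrow> real \<Rightarrow> complex" where
  "lp_block c n x = (\<Sum>k\<in>{-(2 ^ (n + 2))..2 ^ (n + 2)}.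
      complex_of_real (lp_mult n k) * c k * exp (2 * pi * \<i> * of_int k * of_real x))"

(* B^beta_{infty,infty} norm; membership = finiteness (boundedness) *)
definition besov_norm :: "real \<Rightarrow> (int \<Rightarrow> complex) \<Rightarrow> real" where
  "besov_norm \<beta> c = (SUP p\<in>UNIV. 2 powr ((real (fst p) - 1) * \<beta>) * norm (lp_block c (fst p) (snd p)))"

(* real-valued distribution in C^beta *)
definition in_besov :: "real \<Rightarrow> (int \<Rightarrow> complex) \<Rightarrow> bool" where
  "in_besov \<beta> c \<longleftrightarrow> (\<forall>k. c (-k) = cnj (c k)) \<and>
     bounded (range (\<lambda>p. 2 powr ((real (fst p) - 1) * \<beta>) * norm (lp_block c (fst p) (snd p))))"

definition fun_in_besov :: "real \<Rightarrow> (real \<Rightarrow> real) \<Rightarrow> bool" where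
  "fun_in_besov \<beta> f \<longleftrightarrow> periodic1 f \<and> continuous_on UNIV f \<and> in_besov \<beta> (fcoeff f)"

definition CT_besov0 :: "real \<Rightarrow> real \<Rightarrow> (real \<Rightarrow> real \<Rightarrow> real) \<Rightarrow> bool" where
  "CT_besov0 T \<beta> Z \<longleftrightarrow>
     (\<forall>t\<in>{0..T}. fun_in_besov \<beta> (Z t) \<and> tmean (Z t) = 0) \<and>
     (\<forall>t\<in>{0..T}. \<forall>\<epsilon>>0. \<exists>\<delta>>0. \<forall>s\<in>{0..T}. \<bar>s - t\<bar> < \<delta> \<longrightarrow>
        besov_norm \<beta> (\<lambda>k. fcoeff (Z s) k - fcoeff (Z t) k) < \<epsilon>)"

definition Ceta_besov :: "real \<Rightarrow> real \<Rightarrow> real \<Rightarrow> (real \<Rightarrow> real \<Rightarrow> real) \<Rightarrow> bool" where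
  "Ceta_besov \<eta> T \<beta> w \<longleftrightarrow>
     (\<forall>t\<in>{0<..T}. fun_in_besov \<beta> (w t)) \<and>
     (\<forall>t\<in>{0<..T}. \<forall>\<epsilon>>0. \<exists>\<delta>>0. \<forall>s\<in>{0<..T}. \<bar>s - t\<bar> < \<delta> \<longrightarrow>
        besov_norm \<beta> (\<lambda>k. fcoeff (w s) k - fcoeff (w t) k) < \<epsilon>) \<and>
     bdd_above ((\<lambda>t. min (t powr \<eta>) 1 * besov_norm \<beta> (fcoeff (w t))) ` {0<..T})"

definition rho :: "(real \<Rightarrow> real) \<Rightarrow> real \<Rightarrow> real" where
  "rho f = (THE r. periodic1 r \<and> (\<forall>x. r differentiable (at x)) \<and>
                   (\<forall>x. (deriv r) differentiable (at x)) \<and>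
                   (\<forall>x. - deriv (deriv r) x = f x - tmean f) \<and> tmean r = 0)"

definition heat_mult :: "real \<Rightarrow> int \<Rightarrow> complex" where
  "heat_mult t k = complex_of_real (exp (- 4 * pi\<^sup>2 * (of_int k)\<^sup>2 * t))"

definition dx_mult :: "int \<Rightarrow> complex" where
  "dx_mult k = 2 * pi * \<i> * of_int k"

(* mild solution of the remainder equation on [0,T], tested against each Fourier mode:
   w_t = e^{t Delta} zeta + int_0^t e^{(t-s)Delta} chi d_x((w_s+Z_s)^2 d_x rho_{w_s+Z_s}) ds *)
definition mild_solution ::
  "real \<Rightarrow> real \<Rightarrow> real \<Rightarrow> real \<Rightarrow> (int \<Rightarrow> complex) \<Rightarrow> (real \<Rightarrow> real \<Rightarrow> real)
     \<Rightarrow> (real \<Rightarrow> real \<Rightarrow> real) \<Rightarrow> bool" where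
  "mild_solution \<eta> \<alpha> T chi \<zeta> Z w \<longleftrightarrow>
     Ceta_besov \<eta> T \<alpha> w \<and>
     (\<forall>t\<in>{0<..T}. \<forall>k.
        fcoeff (w t) k =
          heat_mult t k * \<zeta> k +
          integral {0..t} (\<lambda>s. heat_mult (t - s) k * complex_of_real chi * dx_mult k *
             fcoeff (\<lambda>x. (w s x + Z s x)\<^sup>2 * deriv (rho (\<lambda>y. w s y + Z s y)) x) k))"

end

theory Submission
  imports Defs
begin

text \<open>The mean is the zeroth Fourier coefficient. In the mild formulation that coefficient
  is transported by the heat multiplier, which is 1 at frequency 0, while the nonlinearity is
  a derivative, whose multiplier vanishes at frequency 0: mass is conserved.\<close>

lemma fcoeff_0_eq_tmean:
  assumes "f integrable_on {0..1}"
  shows "fcoeff f 0 = complex_of_real (tmean f)"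
proof -
  have "fcoeff f 0 = integral {0..1} (complex_of_real \<circ> f)"
    unfolding fcoeff_def by (simp add: o_def)
  also have "\<dots> = complex_of_real (integral {0..1} f)"
    by (rule integral_linear[OF assms bounded_linear_of_real])
  finally show ?thesis
    unfolding tmean_def .
qed

lemma heat_mult_0 [simp]: "heat_mult t 0 = 1"
  by (simp add: heat_mult_def)

lemma dx_mult_0 [simp]: "dx_mult 0 = 0"
  by (simp add: dx_mult_def)

lemma mild_solution_fcoeff_0:
  assumes "mild_solution \<eta> \<alpha> T chi \<zeta> Z w" and "t \<in> {0<..T}"
  shows "fcoeff (w t) 0 = \<zeta> 0"
  using assms unfolding mild_solution_def by simp

lemma mild_solution_integrable:
  assumes "mild_solution \<eta> \<alpha> T chi \<zeta> Z w" and "t \<in> {0<..T}"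
  shows "w t integrable_on {0..1}"
proof -
  have "continuous_on UNIV (w t)"
    using assms unfolding mild_solution_def Ceta_besov_def fun_in_besov_def by blast
  then show ?thesis
    by (meson continuous_on_subset integrable_continuous_interval top_greatest)
qed

theorem corollary3p7:
  fixes \<alpha>0 \<alpha> \<eta> T chi :: real
    and \<zeta> :: "int \<Rightarrow> complex"
    and Z w :: "real \<Rightarrow> real \<Rightarrow> real"
  assumes "-1/2 < \<alpha>0" "\<alpha>0 < 0"
    and "0 < \<alpha>" "\<alpha> < \<alpha>0 + 1/2"
    and "(\<alpha> - \<alpha>0) / 2 < \<eta>" "\<eta> < 1/4"
    and "T > 0"
    and "in_besov \<alpha>0 \<zeta>"
    and "CT_besov0 T \<alpha> Z"
    and "mild_solution \<eta> \<alpha> T chi \<zeta> Z w"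
  shows "\<forall>t\<in>{0<..T}. complex_of_real (tmean (w t)) = \<zeta> 0"
proof
  fix t assume t: "t \<in> {0<..T}"
  have "complex_of_real (tmean (w t)) = fcoeff (w t) 0"
    using fcoeff_0_eq_tmean[OF mild_solution_integrable[OF assms(10) t]] by simp
  also have "\<dots> = \<zeta> 0"
    using mild_solution_fcoeff_0[OF assms(10) t] .
  finally show "complex_of_real (tmean (w t)) = \<zeta> 0" .
qed

end
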